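(* Let $C\subseteq\mathbb{F}_q^n$ be a linear code, $t\ge 1$ an integer, and $(A,B)$ a $2$-power $t$-error locating pair for $C$. Let $\mathbf{y}=\mathbf{c}+\mathbf{e}$ with $\mathbf{c}\in C$ and $\mathrm{w}(\mathbf{e})=t$, $I_{\mathbf{e}}=\mathrm{supp}(\mathbf{e})$, and let $M_1,M_2,M$ be as defined in the context. Run the following algorithm on input $(C,\mathbf{y},t,A,B)$: compute $M$; set $J=Z(M)$; with $H$ a full-rank parity-check matrix of $C$ and $H_J$ the submatrix of $H$ formed by the columns with index in $J$, if the linear system $H_J\mathbf{u}^T=H\mathbf{y}^T$ (unknown $\mathbf{u}\in\mathbb{F}_q^{|J|}$) has no nonzero solution, return failure; otherwise take a nonzero solution $\mathbf{u}$, let $\mathbf{e}'\in\mathbb{F}_q^n$ have $\mathbf{e}'_J=\mathbf{u}$ and $e'_i=0$ for $i\notin J$, and return $\mathbf{y}-\mathbf{e}'$. Then the algorithm returns $\mathbf{c}$ if and only if $A(I_{\mathbf{e}})=M$.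
   Context: All codes are $\mathbb{F}_q$-linear subspaces of $\mathbb{F}_q^n$. $\mathbf{u}*\mathbf{v}=(u_1v_1,\dots,u_nv_n)$, $\mathbf{u}^i=(u_1^i,\dots,u_n^i)$; $A*B$ is the span of all $\mathbf{a}*\mathbf{b}$; $\langle\mathbf{u},\mathbf{v}\rangle=\sum_iu_iv_i$ and $X^\perp$ is the dual. $\mathrm{w}$ Hamming weight, $\mathrm{d}$ minimum distance, $\mathrm{supp}(\mathbf{x})=\{i:x_i\ne0\}$. For $J=\{j_1<\dots<j_s\}\subseteq\{1,\dots,n\}$, $\mathbf{x}_J=(x_{j_1},\dots,x_{j_s})$; $A(J)=\{\mathbf{a}\in A:\mathbf{a}_J=\mathbf{0}\}\subseteq\mathbb{F}_q^n$; $Z(M)=\{i: a_i=0\ \forall\mathbf{a}\in M\}$. $M_1=\{\mathbf{a}\in A\mid \langle \mathbf{a}*\mathbf{y},\mathbf{b}\rangle=0\ \forall \mathbf{b}\in B\}$, $M_2=\{\mathbf{a}\in A\mid \langle \mathbf{a}*\mathbf{y}^2,\mathbf{v}\rangle=0\ \forall \mathbf{v}\in (B^{\perp}*C)^{\perp}\}$, $M=M_1\cap M_2$. A pair $(A,B)$ is a $2$-power $t$-error locating pair for $C$ if: (1) $A*B\subseteq C^\perp$; (2) $\dim A>t$; (3) $\mathrm{d}(A^\perp)>t$; (4) $\mathrm{d}(A)+\mathrm{d}(C)>n$; (5) $\dim B+\dim (B^\perp*C)^\perp\ge t$. *)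

theory Defs
  imports "HOL-Analysis.Analysis"
begin

text \<open>Vectors of F_q^n are modelled as 'a^'n with 'a a finite field and 'n a finite
index type (n = CARD('n)). Linear codes are subspaces w.r.t. the library vector space
structure vec (scalar multiplication *s).\<close>

definition smul :: "'a::field^'n \<Rightarrow> 'a^'n \<Rightarrow> 'a^'n" where
  "smul u v = (\<chi> i. u $ i * v $ i)"

definition vpow :: "'a::field^'n \<Rightarrow> nat \<Rightarrow> 'a^'n" where
  "vpow u k = (\<chi> i. u $ i ^ k)"

definition dotp :: "'a::field^'n::finite \<Rightarrow> 'a^'n \<Rightarrow> 'a" where
  "dotp u v = (\<Sum>i\<in>UNIV. u $ i * v $ i)"

definition star_code :: "('a::field^'n) set \<Rightarrow> ('a^'n) set \<Rightarrow> ('a^'n) set" where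
  "star_code A B = vec.span {smul a b | a b. a \<in> A \<and> b \<in> B}"

definition dual :: "('a::field^'n::finite) set \<Rightarrow> ('a^'n) set" where
  "dual X = {v. \<forall>x\<in>X. dotp x v = 0}"

definition supp :: "'a::zero^'n \<Rightarrow> 'n set" where
  "supp x = {i. x $ i \<noteq> 0}"

definition wt :: "'a::zero^'n::finite \<Rightarrow> nat" where
  "wt x = card (supp x)"

text \<open>Minimum distance; for the zero code we use n+1 (playing the role of infinity).\<close>
definition mindist :: "('a::zero^'n::finite) set \<Rightarrow> nat" where
  "mindist X = (if X \<subseteq> {0} then CARD('n) + 1 else Min {wt x | x. x \<in> X \<and> x \<noteq> 0})"

definition vanish_on :: "('a::zero^'n) set \<Rightarrow> 'n set \<Rightarrow> ('a^'n) set" where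
  "vanish_on A J = {a \<in> A. \<forall>j\<in>J. a $ j = 0}"

definition zero_set :: "('a::zero^'n) set \<Rightarrow> 'n set" where
  "zero_set M = {i. \<forall>a\<in>M. a $ i = 0}"

definition M1 :: "('a::field^'n::finite) set \<Rightarrow> ('a^'n) set \<Rightarrow> 'a^'n \<Rightarrow> ('a^'n) set" where
  "M1 A B y = {a \<in> A. \<forall>b\<in>B. dotp (smul a y) b = 0}"

definition M2 :: "('a::field^'n::finite) set \<Rightarrow> ('a^'n) set \<Rightarrow> ('a^'n) set \<Rightarrow> 'a^'n \<Rightarrow> ('a^'n) set" where
  "M2 A B C y = {a \<in> A. \<forall>v\<in>dual (star_code (dual B) C). dotp (smul a (vpow y 2)) v = 0}"

definition Mset :: "('a::field^'n::finite) set \<Rightarrow> ('a^'n) set \<Rightarrow> ('a^'n) set \<Rightarrow> 'a^'n \<Rightarrow> ('a^'n) set" where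
  "Mset A B C y = M1 A B y \<inter> M2 A B C y"

definition two_power_elp :: "('a::field^'n::finite) set \<Rightarrow> ('a^'n) set \<Rightarrow> ('a^'n) set \<Rightarrow> nat \<Rightarrow> bool" where
  "two_power_elp C A B t \<longleftrightarrow>
     star_code A B \<subseteq> dual C \<and>
     vec.dim A > t \<and>
     mindist (dual A) > t \<and>
     mindist A + mindist C > CARD('n) \<and>
     vec.dim B + vec.dim (dual (star_code (dual B) C)) \<ge> t"

text \<open>H given by its list of rows; H x^T is the list of inner products.\<close>
definition Hmul :: "('a::field^'n::finite) list \<Rightarrow> 'a^'n \<Rightarrow> 'a list" where
  "Hmul H x = map (\<lambda>h. dotp h x) H"

definition full_rank_parity_check :: "('a::field^'n::finite) list \<Rightarrow> ('a^'n) set \<Rightarrow> bool" where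
  "full_rank_parity_check H C \<longleftrightarrow>
     distinct H \<and> vec.independent (set H) \<and> (\<forall>x. x \<in> C \<longleftrightarrow> Hmul H x = map (\<lambda>_. 0) H)"

text \<open>Possible outputs of the (nondeterministic: "take a nonzero solution") decoding
algorithm; None = failure. A nonzero u in F_q^|J| with e'_J = u, e' zero off J, is the
same as a nonzero e' supported in J, and H_J u^T = H e'^T.\<close>
definition alg_outputs :: "('a::field^'n::finite) set \<Rightarrow> 'a^'n \<Rightarrow> nat \<Rightarrow> ('a^'n) set \<Rightarrow> ('a^'n) set
     \<Rightarrow> ('a^'n) list \<Rightarrow> ('a^'n) option set" where
  "alg_outputs C y t A B H =
    (let J = zero_set (Mset A B C y);
         sols = {e'. e' \<noteq> 0 \<and> (\<forall>i. i \<notin> J \<longrightarrow> e' $ i = 0) \<and> Hmul H e' = Hmul H y}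
     in if sols = {} then {None} else (\<lambda>e'. Some (y - e')) ` sols)"

end

theory Submission imports Defs begin

text \<open>Every a in A(I_e) satisfies a * y = a * c and a * y^2 = (a * c) * c, so A * B \<subseteq> C^\<perp>
(which also gives a * c \<in> B^\<perp>) puts A(I_e) inside M; equality M = A(I_e) thus says that
M sees all of I_e. If I_e \<subseteq> Z(M), the true error e is a solution of the syndrome system,
and it is the only one: the difference of two solutions is a codeword supported in J = Z(M),
while dim A > t = |I_e| yields a nonzero a \<in> A(I_e) = M supported outside J, and disjoint
supports contradict d(A) + d(C) > n. Conversely, if the algorithm can output c, then e is a
solution, hence supported in Z(M), which forces M \<subseteq> A(I_e).\<close>

lemma dotp_commute: "dotp u v = dotp v (u::'a::field^'n::finite)"
  unfolding dotp_def by (simp add: mult.commute)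

lemma dotp_smul_left: "dotp (smul a u) v = dotp u (smul a (v::'a::field^'n::finite))"
  unfolding dotp_def smul_def by (simp add: algebra_simps)

lemma dotp_diff_right: "dotp h (x - y) = dotp h x - dotp h (y::'a::field^'n::finite)"
  unfolding dotp_def by (simp add: algebra_simps sum_subtractf)

lemma smul_mem_star_code: "a \<in> A \<Longrightarrow> b \<in> B \<Longrightarrow> smul a b \<in> star_code A B"
  unfolding star_code_def by (rule vec.span_base) blast

lemma supp_diff_subset: "supp (x - y) \<subseteq> supp x \<union> supp (y::'a::ab_group_add^'n)"
  unfolding supp_def by auto

lemma mindist_le_wt:
  fixes X :: "('a::zero^'n::finite) set"
  assumes "x \<in> X" "x \<noteq> 0"
  shows "mindist X \<le> wt x"
proof -
  have "finite {wt x | x. x \<in> X \<and> x \<noteq> 0}"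
    by (rule finite_subset[of _ "{..CARD('n)}"]) (auto simp: wt_def card_mono)
  moreover have "\<not> X \<subseteq> {0}" using assms by auto
  ultimately show ?thesis
    unfolding mindist_def using assms by (auto intro: Min_le)
qed

lemma wt_add_wt_le_CARD:
  fixes a x :: "'a::zero^'n::finite"
  assumes "supp a \<inter> supp x = {}"
  shows "wt a + wt x \<le> CARD('n)"
proof -
  have "wt a + wt x = card (supp a \<union> supp x)"
    unfolding wt_def using assms by (simp add: card_Un_disjoint)
  also have "\<dots> \<le> CARD('n)" by (rule card_mono) auto
  finally show ?thesis .
qed

lemma supp_meet_if_mindist_sum_gt:
  fixes A C :: "('a::zero^'n::finite) set"
  assumes "CARD('n) < mindist A + mindist C"
    and "a \<in> A" "a \<noteq> 0" "x \<in> C" "x \<noteq> 0"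
  shows "supp a \<inter> supp x \<noteq> {}"
  using wt_add_wt_le_CARD[of a x] mindist_le_wt[of a A] mindist_le_wt[of x C] assms
  by linarith

lemma vanish_on_nonzero_exists:
  fixes A :: "('a::field^'n::finite) set"
  assumes A: "vec.subspace A" and card: "card I < vec.dim A"
  shows "\<exists>a\<in>vanish_on A I. a \<noteq> 0"
proof (rule ccontr)
  assume none: "\<not> ?thesis"
  define restrict :: "'a^'n \<Rightarrow> 'a^'n" where "restrict = (\<lambda>a. \<chi> i. if i \<in> I then a $ i else 0)"
  have "Vector_Spaces.linear (*s) (*s) restrict"
    unfolding Vector_Spaces.linear_iff restrict_def
    by (auto simp: vec_eq_iff vec.vector_space_axioms)
  moreover have "inj_on restrict (vec.span A)"
    unfolding vec.span_eq_iff[THEN iffD2, OF A]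
  proof (rule inj_onI)
    fix a b assume "a \<in> A" "b \<in> A" and eq: "restrict a = restrict b"
    then have "a - b \<in> A" using A by (simp add: vec.subspace_diff)
    moreover have "\<forall>i\<in>I. (a - b) $ i = 0"
      using eq unfolding restrict_def by (auto simp: vec_eq_iff split: if_splits)
    ultimately show "a = b" using none unfolding vanish_on_def by auto
  qed
  ultimately have "vec.dim A = vec.dim (restrict ` A)"
    by (simp add: vec.dim_image_eq)
  also have "\<dots> \<le> card ((\<lambda>i. axis i (1::'a)) ` I)"
  proof (rule vec.dim_le_card)
    show "restrict ` A \<subseteq> vec.span ((\<lambda>i. axis i 1) ` I)"
    proof
      fix x assume "x \<in> restrict ` A"
      then obtain a where "x = restrict a" by auto
      then have "x = (\<Sum>i\<in>I. a $ i *s axis i 1)"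
        unfolding restrict_def by (auto simp: vec_eq_iff axis_def if_distrib cong: if_cong)
      also have "\<dots> \<in> vec.span ((\<lambda>i. axis i 1) ` I)"
        by (intro vec.span_sum vec.span_scale vec.span_base) auto
      finally show "x \<in> vec.span ((\<lambda>i. axis i 1) ` I)" .
    qed
  qed simp
  also have "\<dots> \<le> card I" by (rule card_image_le) simp
  finally show False using card by simp
qed

lemma subset_zero_set_vanish_on: "I \<subseteq> zero_set (vanish_on A I)"
  unfolding zero_set_def vanish_on_def by auto

lemma supp_disjoint_zero_set: "a \<in> M \<Longrightarrow> supp a \<inter> zero_set M = {}"
  unfolding supp_def zero_set_def by auto

lemma subset_vanish_on_if_subset_zero_set:
  "M \<subseteq> A \<Longrightarrow> I \<subseteq> zero_set M \<Longrightarrow> M \<subseteq> vanish_on A I"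
  unfolding zero_set_def vanish_on_def by auto

lemma vanish_on_supp_subset_Mset:
  assumes AB: "star_code A B \<subseteq> dual C" and "c \<in> C" and y: "y = c + e"
  shows "vanish_on A (supp e) \<subseteq> Mset A B C y"
proof
  fix a assume "a \<in> vanish_on A (supp e)"
  then have a: "a \<in> A" and ae: "\<And>i. a $ i = 0 \<or> e $ i = 0"
    unfolding vanish_on_def supp_def by auto
  have "a $ i * (c $ i + e $ i) = a $ i * c $ i"
    and "a $ i * (c $ i + e $ i)\<^sup>2 = a $ i * c $ i * c $ i" for i
    using ae[of i] by (auto simp: power2_eq_square)
  then have ay: "smul a y = smul a c" and ay2: "smul a (vpow y 2) = smul (smul a c) c"
    unfolding y smul_def vpow_def by (simp_all add: vec_eq_iff)
  have orth: "dotp (smul a c) b = 0" if "b \<in> B" for b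
    using AB smul_mem_star_code[OF a that] \<open>c \<in> C\<close>
    by (auto simp: dual_def dotp_smul_left)
  then have "smul a c \<in> dual B"
    unfolding dual_def by (simp add: dotp_commute)
  then have "smul (smul a c) c \<in> star_code (dual B) C"
    using \<open>c \<in> C\<close> by (rule smul_mem_star_code)
  then show "a \<in> Mset A B C y"
    using a orth unfolding Mset_def M1_def M2_def dual_def by (simp add: ay ay2)
qed

definition error_candidates :: "('a::field^'n::finite) list \<Rightarrow> 'a^'n \<Rightarrow> 'n set \<Rightarrow> ('a^'n) set" where
  "error_candidates H y J = {e'. e' \<noteq> 0 \<and> supp e' \<subseteq> J \<and> Hmul H e' = Hmul H y}"

lemma alg_outputs_eq:
  "alg_outputs C y t A B H =
    (let S = error_candidates H y (zero_set (Mset A B C y))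
     in if S = {} then {None} else (\<lambda>e'. Some (y - e')) ` S)"
proof -
  have "{e'. e' \<noteq> 0 \<and> (\<forall>i. i \<notin> J \<longrightarrow> e' $ i = 0) \<and> Hmul H e' = Hmul H y} = error_candidates H y J"
    for J
    unfolding error_candidates_def supp_def by blast
  then show ?thesis unfolding alg_outputs_def Let_def by presburger
qed

lemma alg_outputs_nonempty: "alg_outputs C y t A B H \<noteq> {}"
  unfolding alg_outputs_eq Let_def by auto

lemma ball_alg_outputs_eq_iff:
  "(\<forall>out \<in> alg_outputs C y t A B H. out = r) \<longleftrightarrow> alg_outputs C y t A B H = {r}"
proof
  assume "\<forall>out \<in> alg_outputs C y t A B H. out = r"
  then have "alg_outputs C y t A B H \<subseteq> {r}" by blast
  then show "alg_outputs C y t A B H = {r}"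
    using alg_outputs_nonempty[of C y t A B H] subset_singleton_iff by blast
qed simp

lemma Some_mem_alg_outputs_iff:
  "Some c \<in> alg_outputs C y t A B H \<longleftrightarrow> y - c \<in> error_candidates H y (zero_set (Mset A B C y))"
  unfolding alg_outputs_eq Let_def by (auto simp: image_iff intro!: bexI[of _ "y - c"])

lemma alg_outputs_eq_singleton:
  "error_candidates H y (zero_set (Mset A B C y)) = {e} \<Longrightarrow> alg_outputs C y t A B H = {Some (y - e)}"
  unfolding alg_outputs_eq Let_def by simp

lemma Hmul_eq_iff_diff_mem:
  assumes "full_rank_parity_check H C"
  shows "Hmul H x = Hmul H y \<longleftrightarrow> x - y \<in> C"
proof -
  have "x - y \<in> C \<longleftrightarrow> Hmul H (x - y) = map (\<lambda>_. 0) H"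
    using assms unfolding full_rank_parity_check_def by blast
  also have "\<dots> \<longleftrightarrow> Hmul H x = Hmul H y"
    unfolding Hmul_def by (simp add: dotp_diff_right map_eq_conv)
  finally show ?thesis by simp
qed

lemma error_candidates_unique:
  fixes A C :: "('a::field^'n::finite) set"
  assumes H: "full_rank_parity_check H C"
    and dist: "CARD('n) < mindist A + mindist C"
    and a: "a \<in> A" "a \<noteq> 0" "supp a \<inter> J = {}"
    and e1: "e1 \<in> error_candidates H y J" and e2: "e2 \<in> error_candidates H y J"
  shows "e1 = e2"
proof (rule ccontr)
  assume "e1 \<noteq> e2"
  moreover have "Hmul H e1 = Hmul H e2"
    using e1 e2 unfolding error_candidates_def by simp
  then have "e1 - e2 \<in> C" using Hmul_eq_iff_diff_mem[OF H] by blast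
  ultimately have "supp a \<inter> supp (e1 - e2) \<noteq> {}"
    using supp_meet_if_mindist_sum_gt[OF dist a(1,2)] by simp
  moreover have "supp (e1 - e2) \<subseteq> J"
    using e1 e2 supp_diff_subset[of e1 e2] unfolding error_candidates_def by auto
  ultimately show False using a(3) by blast
qed

lemma error_mem_error_candidates:
  assumes "full_rank_parity_check H C" and "c \<in> C" and "y = c + e"
    and "e \<noteq> 0" and "supp e \<subseteq> J"
  shows "e \<in> error_candidates H y J"
  using assms Hmul_eq_iff_diff_mem[of H C y e] unfolding error_candidates_def by auto

lemma alg_outputs_eq_Some_if_vanish_on_eq_Mset:
  fixes A C :: "('a::field^'n::finite) set"
  assumes A: "vec.subspace A" and dimA: "card (supp e) < vec.dim A"
    and dist: "CARD('n) < mindist A + mindist C"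
    and H: "full_rank_parity_check H C" and c: "c \<in> C" "y = c + e" and e: "e \<noteq> 0"
    and V_eq_M: "vanish_on A (supp e) = Mset A B C y"
  shows "alg_outputs C y t A B H = {Some c}"
proof -
  let ?J = "zero_set (Mset A B C y)"
  obtain a where "a \<in> vanish_on A (supp e)" "a \<noteq> 0"
    using vanish_on_nonzero_exists[OF A dimA] by blast
  then have a: "a \<in> A" "a \<noteq> 0" "supp a \<inter> ?J = {}"
    using supp_disjoint_zero_set[of a "Mset A B C y"] V_eq_M unfolding vanish_on_def by auto
  have "e \<in> error_candidates H y ?J"
    using error_mem_error_candidates[OF H c e] subset_zero_set_vanish_on[of "supp e" A] V_eq_M
    by simp
  then have "error_candidates H y ?J = {e}"
    using error_candidates_unique[OF H dist a] by blast
  then have "alg_outputs C y t A B H = {Some (y - e)}"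
    by (rule alg_outputs_eq_singleton)
  then show ?thesis using c by simp
qed

lemma vanish_on_eq_Mset_if_Some_mem_alg_outputs:
  assumes AB: "star_code A B \<subseteq> dual C" and c: "c \<in> C" "y = c + e"
    and out: "Some c \<in> alg_outputs C y t A B H"
  shows "vanish_on A (supp e) = Mset A B C y"
proof -
  have "supp e \<subseteq> zero_set (Mset A B C y)"
    using out c unfolding Some_mem_alg_outputs_iff error_candidates_def by simp
  then have "Mset A B C y \<subseteq> vanish_on A (supp e)"
    by (rule subset_vanish_on_if_subset_zero_set[rotated]) (auto simp: Mset_def M1_def)
  then show ?thesis using vanish_on_supp_subset_Mset[OF AB c] by blast
qed

theorem theorem3p5:
  fixes C A B :: "('a::{finite,field}^'n::finite) set"
    and H :: "('a^'n) list"
    and y c e :: "'a^'n"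
    and t :: nat
  assumes "vec.subspace C" and "vec.subspace A" and "vec.subspace B"
    and "t \<ge> 1"
    and "two_power_elp C A B t"
    and "full_rank_parity_check H C"
    and "c \<in> C" and "y = c + e" and "wt e = t"
  shows "(vanish_on A (supp e) = Mset A B C y \<longleftrightarrow> (\<forall>out \<in> alg_outputs C y t A B H. out = Some c))
       \<and> (vanish_on A (supp e) = Mset A B C y \<longleftrightarrow> Some c \<in> alg_outputs C y t A B H)"
proof -
  have AB: "star_code A B \<subseteq> dual C" and dimA: "card (supp e) < vec.dim A"
    and dist: "CARD('n) < mindist A + mindist C"
    using assms(5,9) unfolding two_power_elp_def wt_def by auto
  have e: "e \<noteq> 0" using assms(4,9) unfolding wt_def supp_def by auto
  note correct = alg_outputs_eq_Some_if_vanish_on_eq_Mset[OF assms(2) dimA dist assms(6-8) e]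
  note complete = vanish_on_eq_Mset_if_Some_mem_alg_outputs[OF AB assms(7,8)]
  have "vanish_on A (supp e) = Mset A B C y \<longleftrightarrow> alg_outputs C y t A B H = {Some c}"
    using correct complete by (metis insertI1)
  moreover have "vanish_on A (supp e) = Mset A B C y \<longleftrightarrow> Some c \<in> alg_outputs C y t A B H"
    using correct complete by (metis insertI1)
  ultimately show ?thesis unfolding ball_alg_outputs_eq_iff by blast
qed

end
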